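(* Let $S=K[x_1,\dots,x_n]$ with $K$ an $F$-finite field of prime characteristic $p$, $I\subseteq S$ a squarefree monomial ideal, and $R=S/I$. If $J$ is a monomial ideal of $R$ and $e\in\mathbb N$, then $J_e$ and $\mathcal P(J)$ are monomial ideals of $R$.
   Context: A monomial ideal of $R$ is one generated by images of monomials. $J_e=\{f\in R\mid \varphi(f^{1/p^e})\in J \text{ for all }\varphi\in\operatorname{Hom}_R(R^{1/p^e},R)\}$ and $\mathcal P(J)=\bigcap_{s\in\mathbb N}J_s$ (Cartier core). *)

theory Defs
  imports "HOL-Library.Poly_Mapping" "HOL-Algebra.QuotRing" "HOL-Computational_Algebra.Primes"
begin

type_synonym ('v, 'k) mpoly = "('v \<Rightarrow>\<^sub>0 nat) \<Rightarrow>\<^sub>0 'k"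

definition polyring :: "('v, 'k::comm_ring_1) mpoly ring" where
  "polyring = \<lparr>carrier = UNIV, monoid.mult = (*), one = 1, zero = 0, add = (+)\<rparr>"

definition monom_pm :: "('v \<Rightarrow>\<^sub>0 nat) \<Rightarrow> ('v, 'k::comm_ring_1) mpoly" where
  "monom_pm a = Poly_Mapping.single a 1"

definition squarefree_monomial_ideal :: "('v, 'k::comm_ring_1) mpoly set \<Rightarrow> bool" where
  "squarefree_monomial_ideal I \<longleftrightarrow>
     (\<exists>G. (\<forall>a\<in>G. \<forall>v. Poly_Mapping.lookup a v \<le> 1) \<and> I = genideal polyring (monom_pm ` G))"

definition monomial_ideal_quot ::
  "('v, 'k::comm_ring_1) mpoly set \<Rightarrow> ('v, 'k) mpoly set set \<Rightarrow> bool" where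
  "monomial_ideal_quot I J \<longleftrightarrow>
     (\<exists>G. J = genideal (polyring Quot I) ((\<lambda>a. I +>\<^bsub>polyring\<^esub> monom_pm a) ` G))"

text \<open>Hom_R(R^{1/q}, R) with q = p^e: additive maps phi : R \<rightarrow> R with
  phi(r^q s) = r phi(s) (i.e. R-linear for the Frobenius-twisted structure).
  phi(f^{1/q}) is phi applied to f.\<close>
definition frob_hom :: "('a, 'b) ring_scheme \<Rightarrow> nat \<Rightarrow> nat \<Rightarrow> ('a \<Rightarrow> 'a) set" where
  "frob_hom R p e = {\<phi>. \<phi> \<in> carrier R \<rightarrow> carrier R \<and>
      (\<forall>a\<in>carrier R. \<forall>b\<in>carrier R. \<phi> (a \<oplus>\<^bsub>R\<^esub> b) = \<phi> a \<oplus>\<^bsub>R\<^esub> \<phi> b) \<and>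
      (\<forall>r\<in>carrier R. \<forall>s\<in>carrier R.
          \<phi> ((r [^]\<^bsub>R\<^esub> (p ^ e)) \<otimes>\<^bsub>R\<^esub> s) = r \<otimes>\<^bsub>R\<^esub> \<phi> s)}"

definition cartier_ideal :: "('a, 'b) ring_scheme \<Rightarrow> nat \<Rightarrow> nat \<Rightarrow> 'a set \<Rightarrow> 'a set" where
  "cartier_ideal R p e J = {f \<in> carrier R. \<forall>\<phi>\<in>frob_hom R p e. \<phi> f \<in> J}"

definition cartier_core :: "('a, 'b) ring_scheme \<Rightarrow> nat \<Rightarrow> 'a set \<Rightarrow> 'a set" where
  "cartier_core R p J = (\<Inter>s. cartier_ideal R p s J)"

definition F_finite :: "'k::field itself \<Rightarrow> bool" where
  "F_finite _ \<longleftrightarrow> (\<exists>B::'k set. finite B \<and>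
      (\<forall>x::'k. \<exists>c. x = (\<Sum>b\<in>B. c b ^ CHAR('k) * b)))"

end

theory Submission
  imports Defs
begin

text \<open>
  Since I is a monomial ideal, a subset of R = S/I is a monomial ideal exactly when it is an
  ideal containing, with the class of a polynomial u, the class of every term of u.
  J_e and P(J) are ideals for every ideal J, so only this term closure needs proof.
  Let u \<in> J_e, let b be an exponent and \<phi> a p^{-e}-linear map, and write q = p^e.
  For any exponent c, sending x^a to the part of \<phi>(x^a) supported on the exponents c' with
  q c' - a = q c - b is again p^{-e}-linear: it is the graded component of \<phi> of degree c - b/q.
  It therefore maps u into J, and since J is term closed, the c-term of its value, which is the
  c-term of \<phi>(x^b-term of u), lies in J. As c is arbitrary, \<phi> maps the x^b-term of u into J.
\<close>

abbreviation lookup where "lookup \<equiv> Poly_Mapping.lookup"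
abbreviation keys where "keys \<equiv> Poly_Mapping.keys"

lemma polyring_simps [simp]:
  "carrier (polyring :: ('v, 'k::comm_ring_1) mpoly ring) = UNIV"
  "x \<otimes>\<^bsub>polyring\<^esub> y = x * y"
  "x \<oplus>\<^bsub>polyring\<^esub> y = x + y"
  "\<one>\<^bsub>polyring\<^esub> = 1"
  "\<zero>\<^bsub>polyring\<^esub> = 0"
  by (simp_all add: polyring_def)

lemma cring_polyring: "cring (polyring :: ('v, 'k::comm_ring_1) mpoly ring)"
proof (rule cringI)
  show "abelian_group (polyring :: ('v, 'k) mpoly ring)"
    by (rule abelian_groupI) (auto simp: polyring_def intro: left_minus)
  show "Group.comm_monoid (polyring :: ('v, 'k) mpoly ring)"
    by (rule monoid.monoid_comm_monoidI)
       (auto simp: polyring_def intro!: monoidI mult.commute mult.assoc)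
qed (auto simp: polyring_def distrib_right)

interpretation P: cring "polyring :: ('v, 'k::comm_ring_1) mpoly ring"
  by (rule cring_polyring)

lemma polyring_minus [simp]: "\<ominus>\<^bsub>polyring\<^esub> x = - (x :: ('v, 'k::comm_ring_1) mpoly)"
  by (rule P.minus_equality) auto

lemma polyring_pow [simp]: "x [^]\<^bsub>polyring\<^esub> (n::nat) = (x :: ('v, 'k::comm_ring_1) mpoly) ^ n"
  by (induct n) (auto simp: mult.commute)

lemma ideal_polyringI:
  fixes A :: "('v, 'k::comm_ring_1) mpoly set"
  assumes "0 \<in> A" "\<And>x y. x \<in> A \<Longrightarrow> y \<in> A \<Longrightarrow> x + y \<in> A"
    and "\<And>x. x \<in> A \<Longrightarrow> - x \<in> A" "\<And>x y. x \<in> A \<Longrightarrow> y * x \<in> A"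
  shows "ideal A polyring"
  by (rule idealI[OF P.ring_axioms], rule P.add.subgroupI) (use assms in \<open>auto simp: mult.commute\<close>)

context
  fixes A :: "('v, 'k::comm_ring_1) mpoly set"
  assumes A: "ideal A polyring"
begin

lemma ideal_polyring_zero: "0 \<in> A"
  using ideal.axioms(1)[OF A] additive_subgroup.zero_closed by fastforce

lemma ideal_polyring_add: "x \<in> A \<Longrightarrow> y \<in> A \<Longrightarrow> x + y \<in> A"
  using ideal.axioms(1)[OF A] additive_subgroup.a_closed by fastforce

lemma ideal_polyring_uminus: "x \<in> A \<Longrightarrow> - x \<in> A"
  using ideal.axioms(1)[OF A] additive_subgroup.a_inv_closed by fastforce

lemma ideal_polyring_mult_left: "x \<in> A \<Longrightarrow> y * x \<in> A"
  using ideal.I_l_closed[OF A] by fastforce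

lemma ideal_polyring_sum: "(\<And>i. i \<in> S \<Longrightarrow> f i \<in> A) \<Longrightarrow> sum f S \<in> A"
  by (induct S rule: infinite_finite_induct) (auto intro: ideal_polyring_zero ideal_polyring_add)

end

lemma CHAR_mpoly: "CHAR(('v, 'k::comm_ring_1) mpoly) = CHAR('k)"
proof (rule CHAR_eqI)
  show "of_nat CHAR('k) = (0 :: ('v, 'k) mpoly)"
    by (metis of_nat_CHAR single_of_nat single_zero)
  show "CHAR('k) dvd n" if "of_nat n = (0 :: ('v, 'k) mpoly)" for n
  proof -
    have "(of_nat n :: 'k) = 0"
      using that by (metis single_of_nat lookup_single_eq lookup_zero)
    then show ?thesis by (simp add: of_nat_eq_0_iff_char_dvd)
  qed
qed

subsection \<open>Restriction of supports and monomial ideals of the polynomial ring\<close>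

definition restrict_keys :: "'a set \<Rightarrow> ('a \<Rightarrow>\<^sub>0 'b::zero) \<Rightarrow> 'a \<Rightarrow>\<^sub>0 'b" where
  "restrict_keys A f = Poly_Mapping.mapp (\<lambda>k c. c when k \<in> A) f"

lemma lookup_restrict_keys: "lookup (restrict_keys A f) k = (lookup f k when k \<in> A)"
  by (auto simp: restrict_keys_def lookup_mapp when_def in_keys_iff)

lemma keys_restrict_keys: "keys (restrict_keys A f) \<subseteq> keys f"
  by (auto simp: in_keys_iff lookup_restrict_keys)

lemma restrict_keys_add: "restrict_keys A (f + g) = restrict_keys A f + restrict_keys A (g :: _ \<Rightarrow>\<^sub>0 'b::monoid_add)"
  by (rule poly_mapping_eqI) (simp add: lookup_restrict_keys lookup_add when_add_distrib)

lemma restrict_keys_diff: "restrict_keys A (f - g) = restrict_keys A f - restrict_keys A (g :: _ \<Rightarrow>\<^sub>0 'b::ab_group_add)"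
  by (rule poly_mapping_eqI) (simp add: lookup_restrict_keys lookup_minus when_diff_distrib)

lemma restrict_keys_zero [simp]: "restrict_keys A 0 = 0"
  by (rule poly_mapping_eqI) (simp add: lookup_restrict_keys)

lemma restrict_keys_sum:
  "restrict_keys A (sum f S) = (\<Sum>i\<in>S. restrict_keys A (f i :: _ \<Rightarrow>\<^sub>0 'b::comm_monoid_add))"
  by (induct S rule: infinite_finite_induct)
     (simp_all add: restrict_keys_add)

lemma restrict_keys_single:
  "restrict_keys A (Poly_Mapping.single x c) = (if x \<in> A then Poly_Mapping.single x c else 0)"
  by (rule poly_mapping_eqI) (auto simp: lookup_restrict_keys lookup_single when_def)

definition term_at :: "'a \<Rightarrow> ('a \<Rightarrow>\<^sub>0 'b::zero) \<Rightarrow> 'a \<Rightarrow>\<^sub>0 'b" where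
  "term_at a f = Poly_Mapping.single a (lookup f a)"

lemma term_at_eq_restrict_keys: "term_at a f = restrict_keys {a} f"
  by (rule poly_mapping_eqI) (auto simp: term_at_def lookup_restrict_keys lookup_single when_def)

lemma term_at_add: "term_at a (f + g) = term_at a f + term_at a (g :: _ \<Rightarrow>\<^sub>0 'b::monoid_add)"
  by (simp add: term_at_eq_restrict_keys restrict_keys_add)

lemma term_at_sum: "term_at a (sum f S) = (\<Sum>i\<in>S. term_at a (f i :: _ \<Rightarrow>\<^sub>0 'b::comm_monoid_add))"
  by (simp add: term_at_eq_restrict_keys restrict_keys_sum)

lemma term_at_restrict_keys: "term_at c (restrict_keys A f) = (if c \<in> A then term_at c f else 0)"
  by (simp add: term_at_def lookup_restrict_keys)

lemma term_at_not_in_keys: "a \<notin> keys f \<Longrightarrow> term_at a f = 0"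
  by (simp add: term_at_def in_keys_iff)

lemma sum_term_at: "(\<Sum>a\<in>keys f. term_at a f) = (f :: _ \<Rightarrow>\<^sub>0 'b::comm_monoid_add)"
  by (rule poly_mapping_eqI)
     (auto simp: lookup_sum term_at_def lookup_single when_def in_keys_iff sum.delta')

lemma restrict_keys_single_mult:
  fixes h :: "('v, 'k::comm_ring_1) mpoly"
  assumes "\<And>y. a + y \<in> B \<longleftrightarrow> y \<in> A"
  shows "restrict_keys B (Poly_Mapping.single a \<kappa> * h) = Poly_Mapping.single a \<kappa> * restrict_keys A h"
proof -
  have "restrict_keys B (Poly_Mapping.single a \<kappa> * term_at y h)
      = Poly_Mapping.single a \<kappa> * restrict_keys A (term_at y h)" for y
    by (auto simp: term_at_def mult_single restrict_keys_single assms)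
  then have "restrict_keys B (\<Sum>y\<in>keys h. Poly_Mapping.single a \<kappa> * term_at y h)
      = Poly_Mapping.single a \<kappa> * (\<Sum>y\<in>keys h. restrict_keys A (term_at y h))"
    by (simp add: restrict_keys_sum sum_distrib_left)
  then show ?thesis
    by (simp flip: sum_distrib_left restrict_keys_sum add: sum_term_at)
qed

lemma lookup_map_times: "lookup (Poly_Mapping.map ((*) n) a) v = n * lookup a v"
  for a :: "'a \<Rightarrow>\<^sub>0 'b::{mult_zero, zero}"
  by (simp add: map.rep_eq when_def)

lemma single_power:
  "Poly_Mapping.single a \<kappa> ^ n = Poly_Mapping.single (Poly_Mapping.map ((*) n) a) (\<kappa> ^ n :: 'k::comm_semiring_1)"
proof (induct n)
  case 0
  have "Poly_Mapping.map (\<lambda>_. 0::nat) a = 0"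
    by (rule poly_mapping_eqI) (simp add: map.rep_eq when_def)
  then show ?case by simp
next
  case (Suc n)
  have map_Suc: "a + Poly_Mapping.map ((*) n) a = Poly_Mapping.map ((*) (Suc n)) a"
    by (rule poly_mapping_eqI) (simp add: lookup_map_times lookup_add)
  show ?case by (simp only: power_Suc Suc mult_single map_Suc)
qed

definition monomial_span :: "('v \<Rightarrow>\<^sub>0 nat) set \<Rightarrow> ('v, 'k::comm_ring_1) mpoly set" where
  "monomial_span H = {f. \<forall>a\<in>keys f. \<exists>h\<in>H. \<exists>k. a = h + k}"

lemma monomial_span_keys_subset: "f \<in> monomial_span H \<Longrightarrow> keys g \<subseteq> keys f \<Longrightarrow> g \<in> monomial_span H"
  by (auto simp: monomial_span_def)

lemma monomial_span_restrict_keys: "f \<in> monomial_span H \<Longrightarrow> restrict_keys A f \<in> monomial_span H"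
  by (rule monomial_span_keys_subset[OF _ keys_restrict_keys])

lemma monomial_span_term_at: "f \<in> monomial_span H \<Longrightarrow> term_at a f \<in> monomial_span H"
  by (simp add: term_at_eq_restrict_keys monomial_span_restrict_keys)

lemma monomial_span_mono: "H \<subseteq> H' \<Longrightarrow> monomial_span H \<subseteq> monomial_span H'"
  unfolding monomial_span_def by blast

lemma monom_pm_in_monomial_span: "h \<in> H \<Longrightarrow> monom_pm h \<in> monomial_span H"
  by (auto simp: monomial_span_def monom_pm_def intro!: exI[of _ 0])

lemma ideal_monomial_span: "ideal (monomial_span H) (polyring :: ('v, 'k::comm_ring_1) mpoly ring)"
proof (rule ideal_polyringI)
  show "x + y \<in> monomial_span H" if "x \<in> monomial_span H" "y \<in> monomial_span H" for x y :: "('v, 'k) mpoly"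
    using that keys_add[of x y] by (auto simp: monomial_span_def)
  show "y * x \<in> monomial_span H" if "x \<in> monomial_span H" for x y :: "('v, 'k) mpoly"
  proof -
    have "\<exists>h\<in>H. \<exists>k. c = h + k" if "c \<in> keys (y * x)" for c
    proof -
      obtain a b where "c = a + b" "b \<in> keys x" using \<open>c \<in> keys (y * x)\<close> keys_mult[of y x] by blast
      moreover obtain h k where "h \<in> H" "b = h + k"
        using \<open>x \<in> monomial_span H\<close> \<open>b \<in> keys x\<close> by (auto simp: monomial_span_def)
      ultimately show ?thesis by (metis add.left_commute)
    qed
    then show ?thesis by (simp add: monomial_span_def)
  qed
qed (auto simp: monomial_span_def keys_def)

lemma genideal_monom_pm: "genideal polyring (monom_pm ` H) = (monomial_span H :: ('v, 'k::comm_ring_1) mpoly set)"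
proof
  show "genideal polyring (monom_pm ` H) \<subseteq> (monomial_span H :: ('v, 'k) mpoly set)"
    by (rule P.genideal_minimal[OF ideal_monomial_span]) (auto intro: monom_pm_in_monomial_span)
  let ?G = "genideal polyring (monom_pm ` H) :: ('v, 'k) mpoly set"
  have G: "ideal ?G polyring" by (rule P.genideal_ideal) auto
  show "monomial_span H \<subseteq> ?G"
  proof
    fix f :: "('v, 'k) mpoly" assume f: "f \<in> monomial_span H"
    have "term_at a f \<in> ?G" if "a \<in> keys f" for a
    proof -
      obtain h k where "h \<in> H" "a = h + k" using f \<open>a \<in> keys f\<close> by (auto simp: monomial_span_def)
      then have "term_at a f = Poly_Mapping.single k (lookup f a) * monom_pm h"
        by (simp add: term_at_def monom_pm_def mult_single add.commute)
      moreover have "monom_pm h \<in> ?G" using P.genideal_self \<open>h \<in> H\<close> by fastforce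
      ultimately show ?thesis using ideal_polyring_mult_left[OF G] by simp
    qed
    then show "f \<in> ?G" using ideal_polyring_sum[OF G] sum_term_at[of f] by metis
  qed
qed

subsection \<open>Frobenius-linear maps and Cartier ideals in a commutative ring\<close>

context cring
begin

lemma frob_homD:
  assumes "\<phi> \<in> frob_hom R p e"
  shows "x \<in> carrier R \<Longrightarrow> \<phi> x \<in> carrier R"
    and "x \<in> carrier R \<Longrightarrow> y \<in> carrier R \<Longrightarrow> \<phi> (x \<oplus> y) = \<phi> x \<oplus> \<phi> y"
    and "r \<in> carrier R \<Longrightarrow> s \<in> carrier R \<Longrightarrow> \<phi> (r [^] (p ^ e) \<otimes> s) = r \<otimes> \<phi> s"
  using assms by (auto simp: frob_hom_def)

lemma frob_hom_zero:
  assumes "\<phi> \<in> frob_hom R p e"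
  shows "\<phi> \<zero> = \<zero>"
proof -
  have "\<phi> \<zero> \<oplus> \<phi> \<zero> = \<phi> \<zero>" using frob_homD(2)[OF assms, of \<zero> \<zero>] by simp
  then show ?thesis using frob_homD(1)[OF assms zero_closed] by (simp add: add.l_cancel_one')
qed

lemma frob_hom_uminus:
  assumes "\<phi> \<in> frob_hom R p e" "x \<in> carrier R"
  shows "\<phi> (\<ominus> x) = \<ominus> \<phi> x"
proof -
  have "\<phi> (\<ominus> x) \<oplus> \<phi> x = \<zero>"
    using assms frob_homD(2)[OF assms(1), of "\<ominus> x" x] frob_hom_zero[OF assms(1)] by (simp add: l_neg)
  then show ?thesis
    using assms frob_homD(1)[OF assms(1)] by (simp add: minus_equality)
qed

lemma frob_hom_mult_left:
  assumes "\<phi> \<in> frob_hom R p e" "r \<in> carrier R"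
  shows "(\<lambda>s. \<phi> (r \<otimes> s)) \<in> frob_hom R p e"
proof -
  have "\<phi> (r \<otimes> (x [^] (p ^ e) \<otimes> s)) = x \<otimes> \<phi> (r \<otimes> s)"
    if "x \<in> carrier R" "s \<in> carrier R" for x s
    using that assms frob_homD(3)[OF assms(1), of x "r \<otimes> s"] by (simp add: m_lcomm)
  then show ?thesis
    using assms frob_homD[OF assms(1)] by (auto simp: frob_hom_def r_distr)
qed

lemma ideal_cartier_ideal:
  assumes "ideal J R"
  shows "ideal (cartier_ideal R p e J) R"
proof -
  interpret J: ideal J R by fact
  show ?thesis
  proof (rule idealI[OF ring_axioms], rule add.subgroupI)
    have "\<zero> \<in> cartier_ideal R p e J" by (auto simp: cartier_ideal_def frob_hom_zero)
    then show "cartier_ideal R p e J \<noteq> {}" by blast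
    show "x \<otimes> a \<in> cartier_ideal R p e J" "a \<otimes> x \<in> cartier_ideal R p e J"
      if a: "a \<in> cartier_ideal R p e J" and x: "x \<in> carrier R" for a x
    proof -
      have "\<phi> (x \<otimes> a) \<in> J" if "\<phi> \<in> frob_hom R p e" for \<phi>
        using a frob_hom_mult_left[OF that x] by (auto simp: cartier_ideal_def)
      then show "x \<otimes> a \<in> cartier_ideal R p e J" "a \<otimes> x \<in> cartier_ideal R p e J"
        using a x by (auto simp: cartier_ideal_def m_comm)
    qed
  qed (auto simp: cartier_ideal_def frob_hom_uminus frob_homD(2))
qed

lemma ideal_cartier_core: "ideal J R \<Longrightarrow> ideal (cartier_core R p J) R"
  unfolding cartier_core_def by (rule i_Intersect) (auto intro: ideal_cartier_ideal)

end

subsection \<open>Quotients by monomial ideals\<close>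

locale monomial_quotient =
  fixes GI :: "('v \<Rightarrow>\<^sub>0 nat) set" and I :: "('v, 'k::field) mpoly set"
  assumes I_eq: "I = monomial_span GI"
begin

abbreviation R :: "('v, 'k) mpoly set ring" where "R \<equiv> polyring Quot I"

abbreviation proj :: "('v, 'k) mpoly \<Rightarrow> ('v, 'k) mpoly set" where
  "proj u \<equiv> I +>\<^bsub>polyring\<^esub> u"

lemma ideal_I: "ideal I polyring"
  unfolding I_eq by (rule ideal_monomial_span)

lemma restrict_keys_in_I: "f \<in> I \<Longrightarrow> restrict_keys A f \<in> I"
  unfolding I_eq by (rule monomial_span_restrict_keys)

lemma term_at_in_I: "f \<in> I \<Longrightarrow> term_at a f \<in> I"
  unfolding I_eq by (rule monomial_span_term_at)

sublocale Q: cring R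
  by (rule ideal.quotient_is_cring[OF ideal_I cring_polyring])

lemma proj_ring_hom_ring: "ring_hom_ring polyring R proj"
  by (rule ideal.rcos_ring_hom_ring[OF ideal_I])

lemma proj_ring_hom: "proj \<in> ring_hom polyring R"
  by (rule ideal.rcos_ring_hom[OF ideal_I])

lemma proj_add: "proj (u + v) = proj u \<oplus>\<^bsub>R\<^esub> proj v"
  using ring_hom_add[OF proj_ring_hom, of u v] by simp

lemma proj_mult: "proj (u * v) = proj u \<otimes>\<^bsub>R\<^esub> proj v"
  using ring_hom_mult[OF proj_ring_hom, of u v] by simp

lemma proj_power: "proj (u ^ n) = proj u [^]\<^bsub>R\<^esub> n"
  using ring_hom_ring.hom_nat_pow[OF proj_ring_hom_ring, of u n] by simp

lemma proj_in_carrier [simp]: "proj u \<in> carrier R"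
  using ring_hom_closed[OF proj_ring_hom, of u] by simp

lemma carrier_quotient: "carrier R = range proj"
  by (auto simp: FactRing_def A_RCOSETS_def')

lemma proj_eq_iff: "proj u = proj v \<longleftrightarrow> u - v \<in> I"
  using P.quotient_eq_iff_same_a_r_cos[OF ideal_I, of u v] by (simp add: a_minus_def)

lemma proj_zero [simp]: "proj 0 = \<zero>\<^bsub>R\<^esub>"
  using ring_hom_zero[OF proj_ring_hom P.ring_axioms Q.ring_axioms] by simp

lemma proj_eq_zero_iff: "proj u = \<zero>\<^bsub>R\<^esub> \<longleftrightarrow> u \<in> I"
  using proj_eq_iff[of u 0] by simp

lemma proj_sum_cong: "(\<And>i. i \<in> S \<Longrightarrow> proj (f i) = proj (g i)) \<Longrightarrow> proj (sum f S) = proj (sum g S)"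
  unfolding proj_eq_iff sum_subtractf[symmetric] by (rule ideal_polyring_sum[OF ideal_I])

lemma proj_restrict_keys_cong: "proj u = proj v \<Longrightarrow> proj (restrict_keys A u) = proj (restrict_keys A v)"
  by (simp add: proj_eq_iff restrict_keys_in_I flip: restrict_keys_diff)

lemma ideal_vimage_proj: "ideal A R \<Longrightarrow> ideal {u. proj u \<in> A} polyring"
  using ring_hom_ring.ideal_vimage[OF proj_ring_hom_ring, of A] by simp

lemma proj_in_ideal_of_terms:
  assumes "ideal A R" "\<And>a. proj (term_at a u) \<in> A"
  shows "proj u \<in> A"
  using ideal_polyring_sum[OF ideal_vimage_proj[OF assms(1)], of "keys u" "\<lambda>a. term_at a u"] assms(2)
  by (simp add: sum_term_at)

lemma proj_term_at_in_ideal_iff: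
  assumes A: "ideal A R"
  shows "proj (term_at a u) \<in> A \<longleftrightarrow> lookup u a = 0 \<or> proj (monom_pm a) \<in> A"
proof -
  have "\<zero>\<^bsub>R\<^esub> \<in> A" by (rule additive_subgroup.zero_closed[OF ideal.axioms(1)[OF A]])
  show ?thesis
  proof (cases "lookup u a = 0")
    case True
    then show ?thesis using \<open>\<zero>\<^bsub>R\<^esub> \<in> A\<close> by (simp add: term_at_def)
  next
    case False
    have term_eq: "proj (term_at a u) = proj (Poly_Mapping.single 0 (lookup u a)) \<otimes>\<^bsub>R\<^esub> proj (monom_pm a)"
      by (simp add: term_at_def monom_pm_def mult_single flip: proj_mult)
    have monom_eq: "proj (monom_pm a)
        = proj (Poly_Mapping.single 0 (inverse (lookup u a))) \<otimes>\<^bsub>R\<^esub> proj (term_at a u)"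
      using False by (simp add: term_at_def monom_pm_def mult_single flip: proj_mult)
    show ?thesis
    proof
      assume "proj (term_at a u) \<in> A"
      then have "proj (monom_pm a) \<in> A"
        unfolding monom_eq by (rule ideal.I_l_closed[OF A _ proj_in_carrier])
      then show "lookup u a = 0 \<or> proj (monom_pm a) \<in> A" ..
    next
      assume "lookup u a = 0 \<or> proj (monom_pm a) \<in> A"
      then have "proj (monom_pm a) \<in> A" using False by blast
      then show "proj (term_at a u) \<in> A"
        unfolding term_eq by (rule ideal.I_l_closed[OF A _ proj_in_carrier])
    qed
  qed
qed

lemma monomial_ideal_quotI:
  assumes A: "ideal A R" and term_closed: "\<And>u a. proj u \<in> A \<Longrightarrow> proj (term_at a u) \<in> A"
  shows "monomial_ideal_quot I A"
proof -
  let ?G = "{a. proj (monom_pm a) \<in> A}"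
  let ?Gen = "genideal R ((\<lambda>a. proj (monom_pm a)) ` ?G)"
  have Gen: "ideal ?Gen R" by (rule Q.genideal_ideal) auto
  have gens: "(\<lambda>a. proj (monom_pm a)) ` ?G \<subseteq> ?Gen" by (rule Q.genideal_self) auto
  have "A \<subseteq> ?Gen"
  proof
    fix x assume "x \<in> A"
    then obtain u where x: "x = proj u" using ideal.Icarr[OF A] carrier_quotient by blast
    have "proj (term_at a u) \<in> ?Gen" for a
    proof -
      have "lookup u a = 0 \<or> proj (monom_pm a) \<in> A"
        using term_closed \<open>x \<in> A\<close> x proj_term_at_in_ideal_iff[OF A] by blast
      then show ?thesis using gens proj_term_at_in_ideal_iff[OF Gen] by blast
    qed
    then show "x \<in> ?Gen" using proj_in_ideal_of_terms[OF Gen] x by blast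
  qed
  moreover have "?Gen \<subseteq> A" by (rule Q.genideal_minimal[OF A]) auto
  ultimately have "A = ?Gen" by (rule subset_antisym)
  then show ?thesis unfolding monomial_ideal_quot_def by (rule exI)
qed

lemma vimage_genideal_monomials:
  "{u. proj u \<in> genideal R ((\<lambda>a. proj (monom_pm a)) ` G)} = monomial_span (G \<union> GI)"
proof
  let ?A = "genideal R ((\<lambda>a. proj (monom_pm a)) ` G)" and ?M = "monomial_span (G \<union> GI)"
  have A: "ideal ?A R" by (rule Q.genideal_ideal) auto
  have gens: "(\<lambda>a. proj (monom_pm a)) ` G \<subseteq> ?A" by (rule Q.genideal_self) auto
  have "proj (monom_pm a) \<in> ?A" if "a \<in> GI" for a
  proof -
    have "monom_pm a \<in> I" using I_eq monom_pm_in_monomial_span[OF that] by simp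
    then have "proj (monom_pm a) = \<zero>\<^bsub>R\<^esub>" by (simp only: proj_eq_zero_iff)
    then show ?thesis using additive_subgroup.zero_closed[OF ideal.axioms(1)[OF A]] by simp
  qed
  with gens have "monom_pm ` (G \<union> GI) \<subseteq> {u. proj u \<in> ?A}" by blast
  then show "?M \<subseteq> {u. proj u \<in> ?A}"
    unfolding genideal_monom_pm[symmetric] by (rule P.genideal_minimal[OF ideal_vimage_proj[OF A]])
  show "{u. proj u \<in> ?A} \<subseteq> ?M"
  proof
    have "?A \<subseteq> proj ` ?M"
      by (rule Q.genideal_minimal[OF P.ring_ideal_imp_quot_ideal[OF ideal_I ideal_monomial_span]])
         (auto intro: monom_pm_in_monomial_span)
    moreover fix u assume "u \<in> {u. proj u \<in> ?A}"
    ultimately obtain m where m: "m \<in> ?M" "proj u = proj m" by blast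
    have "u - m \<in> ?M"
      using m(2) proj_eq_iff monomial_span_mono[of GI "G \<union> GI"] unfolding I_eq by blast
    from ideal_polyring_add[OF ideal_monomial_span this m(1)] show "u \<in> ?M" by simp
  qed
qed

lemma monomial_ideal_quotD:
  assumes "monomial_ideal_quot I A"
  shows "ideal A R" and "proj u \<in> A \<Longrightarrow> proj (term_at a u) \<in> A"
proof -
  obtain G where A: "A = genideal R ((\<lambda>a. proj (monom_pm a)) ` G)"
    using assms unfolding monomial_ideal_quot_def by blast
  show "ideal A R" unfolding A by (rule Q.genideal_ideal) auto
  show "proj (term_at a u) \<in> A" if "proj u \<in> A"
    using that vimage_genideal_monomials[of G] monomial_span_term_at unfolding A by blast
qed

text \<open>lift_map \<phi> u is an arbitrary representative of \<phi>(u + I); facts about it hold only modulo I.\<close>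

definition lift_map :: "(('v, 'k) mpoly set \<Rightarrow> ('v, 'k) mpoly set) \<Rightarrow> ('v, 'k) mpoly \<Rightarrow> ('v, 'k) mpoly" where
  "lift_map \<phi> u = (SOME w. \<phi> (proj u) = proj w)"

lemma proj_lift_map: "\<phi> (proj u) \<in> carrier R \<Longrightarrow> proj (lift_map \<phi> u) = \<phi> (proj u)"
  unfolding lift_map_def carrier_quotient by (metis (mono_tags) rangeE someI_ex)

end

subsection \<open>Graded components of Frobenius-linear maps\<close>

definition degree_fiber :: "nat \<Rightarrow> ('v \<Rightarrow>\<^sub>0 nat) \<Rightarrow> ('v \<Rightarrow>\<^sub>0 nat) \<Rightarrow> ('v \<Rightarrow>\<^sub>0 nat) \<Rightarrow> ('v \<Rightarrow>\<^sub>0 nat) set" where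
  "degree_fiber q b c a = {c'. \<forall>v. q * lookup c' v + lookup b v = q * lookup c v + lookup a v}"

lemma degree_fiber_shift:
  "a' + y \<in> degree_fiber q b c (Poly_Mapping.map ((*) q) a' + a) \<longleftrightarrow> y \<in> degree_fiber q b c a"
  by (simp add: degree_fiber_def lookup_add lookup_map_times add_mult_distrib2 add.assoc)

lemma self_in_degree_fiber_iff: "c \<in> degree_fiber q b c a \<longleftrightarrow> a = b"
  by (auto simp: degree_fiber_def poly_mapping_eq_iff fun_eq_iff)

context monomial_quotient
begin

text \<open>
  The component of \<phi> of degree c - b/q, computed on representatives: the a-term of u is sent to
  the part of \<phi>(x^a) supported on degree_fiber q b c a, i.e.\ on the c' with q c' - a = q c - b.
\<close>

definition graded_part ::
  "(('v, 'k) mpoly set \<Rightarrow> ('v, 'k) mpoly set) \<Rightarrow> nat \<Rightarrow> ('v \<Rightarrow>\<^sub>0 nat) \<Rightarrow> ('v \<Rightarrow>\<^sub>0 nat) \<Rightarrow>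
    ('v, 'k) mpoly \<Rightarrow> ('v, 'k) mpoly" where
  "graded_part \<phi> q b c u =
     (\<Sum>a\<in>keys u. restrict_keys (degree_fiber q b c a) (lift_map \<phi> (term_at a u)))"

definition graded_component ::
  "(('v, 'k) mpoly set \<Rightarrow> ('v, 'k) mpoly set) \<Rightarrow> nat \<Rightarrow> ('v \<Rightarrow>\<^sub>0 nat) \<Rightarrow> ('v \<Rightarrow>\<^sub>0 nat) \<Rightarrow>
    ('v, 'k) mpoly set \<Rightarrow> ('v, 'k) mpoly set" where
  "graded_component \<phi> q b c x = proj (graded_part \<phi> q b c (SOME u. x = proj u))"

context
  fixes \<phi> :: "('v, 'k) mpoly set \<Rightarrow> ('v, 'k) mpoly set" and p e :: nat and b c :: "'v \<Rightarrow>\<^sub>0 nat"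
  assumes \<phi>: "\<phi> \<in> frob_hom R p e" and char: "p = CHAR('k)" "prime p"
begin

abbreviation q where "q \<equiv> p ^ e"
abbreviation L where "L \<equiv> lift_map \<phi>"
abbreviation \<Psi> where "\<Psi> \<equiv> graded_part \<phi> q b c"

lemma proj_lift: "proj (L u) = \<phi> (proj u)"
  using Q.frob_homD(1)[OF \<phi>] by (simp add: proj_lift_map)

lemma lift_in_I: "u \<in> I \<Longrightarrow> L u \<in> I"
  using proj_lift[of u] Q.frob_hom_zero[OF \<phi>] by (simp add: flip: proj_eq_zero_iff)

lemma proj_lift_add: "proj (L (u + v)) = proj (L u + L v)"
  using Q.frob_homD(2)[OF \<phi>] by (simp add: proj_lift proj_add)

lemma proj_lift_frob: "proj (L (g ^ q * t)) = proj (g * L t)"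
  using Q.frob_homD(3)[OF \<phi>] by (simp add: proj_lift proj_mult proj_power)

lemma proj_graded_part_superset:
  assumes "finite A" "keys u \<subseteq> A"
  shows "proj (\<Psi> u) = proj (\<Sum>a\<in>A. restrict_keys (degree_fiber q b c a) (L (term_at a u)))"
proof -
  let ?f = "\<lambda>a. restrict_keys (degree_fiber q b c a) (L (term_at a u))"
  have "sum ?f A = sum ?f (keys u) + sum ?f (A - keys u)"
    using sum.subset_diff[OF assms(2,1), of ?f] by (simp only: add.commute)
  moreover have "sum ?f (A - keys u) \<in> I"
    using lift_in_I[OF ideal_polyring_zero[OF ideal_I]] by (intro ideal_polyring_sum[OF ideal_I])
      (auto simp: term_at_not_in_keys intro: restrict_keys_in_I)
  ultimately show ?thesis
    unfolding graded_part_def proj_eq_iff by (simp add: ideal_polyring_uminus[OF ideal_I])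
qed

lemma proj_graded_part_add: "proj (\<Psi> (u + v)) = proj (\<Psi> u + \<Psi> v)"
proof -
  let ?A = "keys u \<union> keys v"
  let ?f = "\<lambda>w a. restrict_keys (degree_fiber q b c a) (L (term_at a w))"
  have "proj (\<Psi> (u + v)) = proj (sum (?f (u + v)) ?A)"
    by (rule proj_graded_part_superset) (auto simp: keys_add)
  also have "\<dots> = proj (\<Sum>a\<in>?A. ?f u a + ?f v a)"
    by (rule proj_sum_cong) (metis proj_lift_add proj_restrict_keys_cong restrict_keys_add term_at_add)
  also have "\<dots> = proj (sum (?f u) ?A + sum (?f v) ?A)"
    by (simp add: sum.distrib)
  also have "\<dots> = proj (\<Psi> u + \<Psi> v)"
    using proj_graded_part_superset[of ?A u] proj_graded_part_superset[of ?A v] by (simp add: proj_add)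
  finally show ?thesis .
qed

lemma graded_part_in_I: "u \<in> I \<Longrightarrow> \<Psi> u \<in> I"
  unfolding graded_part_def
  by (rule ideal_polyring_sum[OF ideal_I]) (auto intro!: restrict_keys_in_I lift_in_I term_at_in_I)

lemma proj_graded_part_cong:
  assumes "proj u = proj v"
  shows "proj (\<Psi> u) = proj (\<Psi> v)"
proof -
  have "\<Psi> (u - v) \<in> I" using assms by (simp add: proj_eq_iff graded_part_in_I)
  then have "proj (\<Psi> v + \<Psi> (u - v)) = proj (\<Psi> v)"
    by (simp add: proj_add flip: proj_eq_zero_iff)
  then show ?thesis
    using proj_graded_part_add[of v "u - v"] by simp
qed

lemma proj_graded_part_sum: "proj (\<Psi> (sum f A)) = proj (\<Sum>i\<in>A. \<Psi> (f i))"
proof (induct A rule: infinite_finite_induct)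
  case (insert x F)
  then show ?case
    using proj_graded_part_add[of "f x" "sum f F"] by (simp add: proj_add)
qed (simp_all add: graded_part_def)

lemma graded_part_single:
  "l \<noteq> 0 \<Longrightarrow> \<Psi> (Poly_Mapping.single a l) = restrict_keys (degree_fiber q b c a) (L (Poly_Mapping.single a l))"
  by (simp add: graded_part_def term_at_def)

lemma proj_graded_part_frob_monomial:
  "proj (\<Psi> (Poly_Mapping.single a' \<kappa> ^ q * Poly_Mapping.single a l))
     = proj (Poly_Mapping.single a' \<kappa> * \<Psi> (Poly_Mapping.single a l))"
proof (cases "\<kappa> = 0 \<or> l = 0")
  case True
  have "(0::('v, 'k) mpoly) ^ q = 0" using char(2) prime_gt_0_nat by (simp add: power_0_left)
  with True show ?thesis by (auto simp: graded_part_def)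
next
  case False
  let ?g = "Poly_Mapping.single a' \<kappa>" and ?t = "Poly_Mapping.single a l"
  let ?E = "Poly_Mapping.map ((*) q) a' + a"
  have prod: "?g ^ q * ?t = Poly_Mapping.single ?E (\<kappa> ^ q * l)"
    by (simp add: single_power mult_single)
  have "proj (\<Psi> (?g ^ q * ?t)) = proj (restrict_keys (degree_fiber q b c ?E) (L (?g ^ q * ?t)))"
    using False by (simp add: prod graded_part_single)
  also have "\<dots> = proj (restrict_keys (degree_fiber q b c ?E) (?g * L ?t))"
    by (rule proj_restrict_keys_cong) (rule proj_lift_frob)
  also have "\<dots> = proj (?g * restrict_keys (degree_fiber q b c a) (L ?t))"
    by (simp add: restrict_keys_single_mult degree_fiber_shift)
  also have "\<dots> = proj (?g * \<Psi> ?t)"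
    using False by (simp add: graded_part_single)
  finally show ?thesis .
qed

lemma proj_graded_part_frob_term:
  "proj (\<Psi> (Poly_Mapping.single a' \<kappa> ^ q * t)) = proj (Poly_Mapping.single a' \<kappa> * \<Psi> t)"
proof -
  let ?g = "Poly_Mapping.single a' \<kappa>"
  have "proj (\<Psi> (?g ^ q * t)) = proj (\<Psi> (\<Sum>y\<in>keys t. ?g ^ q * term_at y t))"
    by (simp add: sum_term_at flip: sum_distrib_left)
  also have "\<dots> = proj (\<Sum>y\<in>keys t. \<Psi> (?g ^ q * term_at y t))"
    by (rule proj_graded_part_sum)
  also have "\<dots> = proj (\<Sum>y\<in>keys t. ?g * \<Psi> (term_at y t))"
    by (rule proj_sum_cong) (simp add: term_at_def proj_graded_part_frob_monomial)
  also have "\<dots> = proj ?g \<otimes>\<^bsub>R\<^esub> proj (\<Psi> (\<Sum>y\<in>keys t. term_at y t))"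
    using proj_graded_part_sum[of "\<lambda>y. term_at y t" "keys t"]
    by (simp add: proj_mult flip: sum_distrib_left)
  also have "\<dots> = proj (?g * \<Psi> t)"
    by (simp add: proj_mult sum_term_at)
  finally show ?thesis .
qed

lemma proj_graded_part_frob: "proj (\<Psi> (g ^ q * t)) = proj (g * \<Psi> t)"
proof -
  have "g ^ q = (\<Sum>y\<in>keys g. term_at y g) ^ q" by (simp add: sum_term_at)
  also have "\<dots> = (\<Sum>y\<in>keys g. term_at y g ^ q)"
    by (rule freshmans_dream_sum') (use char in \<open>simp_all add: CHAR_mpoly\<close>)
  finally have "g ^ q * t = (\<Sum>y\<in>keys g. term_at y g ^ q * t)" by (simp add: sum_distrib_right)
  then have "proj (\<Psi> (g ^ q * t)) = proj (\<Sum>y\<in>keys g. \<Psi> (term_at y g ^ q * t))"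
    by (simp add: proj_graded_part_sum)
  also have "\<dots> = proj (\<Sum>y\<in>keys g. term_at y g * \<Psi> t)"
    by (rule proj_sum_cong) (simp add: term_at_def proj_graded_part_frob_term)
  also have "\<dots> = proj (g * \<Psi> t)"
    by (simp add: sum_term_at flip: sum_distrib_right)
  finally show ?thesis .
qed

lemma graded_component_proj: "graded_component \<phi> q b c (proj u) = proj (\<Psi> u)"
  unfolding graded_component_def by (rule proj_graded_part_cong) (metis (mono_tags) someI_ex)

lemma graded_component_frob_hom: "graded_component \<phi> q b c \<in> frob_hom R p e"
  unfolding frob_hom_def
proof (intro CollectI conjI ballI)
  show "graded_component \<phi> q b c \<in> carrier R \<rightarrow> carrier R"
    by (auto simp: graded_component_def)
  fix x y assume "x \<in> carrier R" "y \<in> carrier R"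
  then obtain u v where x: "x = proj u" and y: "y = proj v" by (auto simp: carrier_quotient)
  show "graded_component \<phi> q b c (x \<oplus>\<^bsub>R\<^esub> y) = graded_component \<phi> q b c x \<oplus>\<^bsub>R\<^esub> graded_component \<phi> q b c y"
    using proj_graded_part_add[of u v] by (simp add: x y graded_component_proj proj_add flip: proj_add)
  show "graded_component \<phi> q b c (x [^]\<^bsub>R\<^esub> q \<otimes>\<^bsub>R\<^esub> y) = x \<otimes>\<^bsub>R\<^esub> graded_component \<phi> q b c y"
    using proj_graded_part_frob[of u v]
    by (simp add: x y graded_component_proj proj_mult flip: proj_power proj_mult)
qed

lemma term_at_graded_part:
  "term_at c (\<Psi> u) = (if b \<in> keys u then term_at c (L (term_at b u)) else 0)"
proof -
  have "term_at c (\<Psi> u) = (\<Sum>a\<in>keys u. if a = b then term_at c (L (term_at a u)) else 0)"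
    unfolding graded_part_def term_at_sum
    by (rule sum.cong) (auto simp: term_at_restrict_keys self_in_degree_fiber_iff)
  then show ?thesis by (simp add: sum.delta')
qed

lemma term_at_lift_in_ideal:
  assumes J: "monomial_ideal_quot I J" and u: "proj u \<in> cartier_ideal R p e J"
  shows "proj (term_at c (L (term_at b u))) \<in> J"
proof (cases "b \<in> keys u")
  case True
  have "graded_component \<phi> q b c (proj u) \<in> J"
    using u graded_component_frob_hom by (auto simp: cartier_ideal_def)
  then have "proj (term_at c (\<Psi> u)) \<in> J"
    by (simp add: graded_component_proj monomial_ideal_quotD(2)[OF J])
  with True show ?thesis by (simp add: term_at_graded_part)
next
  case False
  then have "term_at c (L (term_at b u)) \<in> I"
    by (simp add: term_at_not_in_keys term_at_in_I lift_in_I ideal_polyring_zero[OF ideal_I])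
  then have "proj (term_at c (L (term_at b u))) = \<zero>\<^bsub>R\<^esub>" by (simp only: proj_eq_zero_iff)
  then show ?thesis
    using additive_subgroup.zero_closed[OF ideal.axioms(1)[OF monomial_ideal_quotD(1)[OF J]]] by simp
qed

end

lemma cartier_ideal_term_closed:
  assumes char: "prime CHAR('k)" and J: "monomial_ideal_quot I J"
    and u: "proj u \<in> cartier_ideal R CHAR('k) e J"
  shows "proj (term_at b u) \<in> cartier_ideal R CHAR('k) e J"
  unfolding cartier_ideal_def
proof (intro CollectI conjI ballI)
  fix \<phi> assume \<phi>: "\<phi> \<in> frob_hom R CHAR('k) e"
  have "proj (lift_map \<phi> (term_at b u)) \<in> J"
    using term_at_lift_in_ideal[OF \<phi> refl char J u]
    by (rule proj_in_ideal_of_terms[OF monomial_ideal_quotD(1)[OF J]])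
  then show "\<phi> (proj (term_at b u)) \<in> J" by (simp add: proj_lift[OF \<phi> refl char])
qed simp

theorem monomial_cartier_ideal:
  assumes "prime CHAR('k)" and J: "monomial_ideal_quot I J"
  shows "monomial_ideal_quot I (cartier_ideal R CHAR('k) e J)"
  using Q.ideal_cartier_ideal[OF monomial_ideal_quotD(1)[OF J]] cartier_ideal_term_closed[OF assms]
  by (rule monomial_ideal_quotI)

theorem monomial_cartier_core:
  assumes "prime CHAR('k)" and J: "monomial_ideal_quot I J"
  shows "monomial_ideal_quot I (cartier_core R CHAR('k) J)"
proof (rule monomial_ideal_quotI)
  show "ideal (cartier_core R CHAR('k) J) R"
    by (rule Q.ideal_cartier_core[OF monomial_ideal_quotD(1)[OF J]])
  fix u a assume "proj u \<in> cartier_core R CHAR('k) J"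
  then have "proj (term_at a u) \<in> cartier_ideal R CHAR('k) s J" for s
    using cartier_ideal_term_closed[OF assms] by (simp add: cartier_core_def)
  then show "proj (term_at a u) \<in> cartier_core R CHAR('k) J"
    by (simp add: cartier_core_def)
qed

end

theorem mainTheorem10:
  fixes I :: "('v::finite, 'k::field) mpoly set"
    and J :: "('v, 'k) mpoly set set"
    and e :: nat
  assumes "prime CHAR('k)"
    and "F_finite TYPE('k)"
    and "squarefree_monomial_ideal I"
    and "monomial_ideal_quot I J"
  shows "monomial_ideal_quot I (cartier_ideal (polyring Quot I) CHAR('k) e J)
       \<and> monomial_ideal_quot I (cartier_core (polyring Quot I) CHAR('k) J)"
proof -
  obtain G where "I = genideal polyring (monom_pm ` G)"
    using assms(3) unfolding squarefree_monomial_ideal_def by blast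
  then interpret monomial_quotient G I
    by unfold_locales (simp add: genideal_monom_pm)
  show ?thesis
    using monomial_cartier_ideal[OF assms(1,4)] monomial_cartier_core[OF assms(1,4)] by blast
qed

end
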